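(* For every set $S$, both $\mathbb{H}'_S$ and $\mathbb{H}_S$ are Elgot monads, where for $f\colon X\to T(Y\uplus X)$ (with $T=H'_S$, resp. $T=H_S$) the iteration $f^\dagger\colon X\to TY$ is the least fixpoint of the $\omega$-continuous endomap $g\mapsto[\eta,g]^\star\cdot f$ on the function space $X\to TY$ (ordered pointwise by $\sqsubseteq$).
   Context: Trajectories over $S$: pairs $\langle I,e\rangle$ with $e\colon I\to S$ and $I$ an interval $[0,d]$ ($d\in\mathbb{R}_{\ge0}$) or $[0,d)$ ($d\in\mathbb{R}_{\ge0}\cup\{\infty\}$). Let $H'_SX=\sum_{d\in\mathbb{R}_{\ge0}}S^{[0,d)}\times X\ \cup\ \sum_{d\in\mathbb{R}_{\ge0}\cup\{\infty\}}S^{[0,d)}$ and $H_SX=\sum_{d\in\mathbb{R}_{\ge0}}S^{[0,d)}\times X\ \cup\ \sum_{I}S^{I}$ with $I$ ranging over all intervals $[0,d]$ ($d\in\mathbb{R}_{\ge0}$) and $[0,d)$ ($d\in\mathbb{R}_{\ge0}\cup\{\infty\}$); elements are written $\langle I,e,x\rangle$ (first summand) and $\langle I,e\rangle$ (second summand). Concatenation: $\langle[0,d_1),e_1\rangle\frown\langle J,e_2\rangle=\langle J',\lambda t.\,\text{if }t<d_1\text{ then }e_1(t)\text{ else }e_2(t-d_1)\rangle$, $J'=[0,d_1+d_2)$ if $J=[0,d_2)$, $J'=[0,d_1+d_2]$ if $J=[0,d_2]$. Monad structure (for both $T=H'_S,H_S$): $\eta(x)=\langle\emptyset,!,x\rangle$;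 for $f\colon X\to TY$: $f^\star\langle I,e,x\rangle=\langle (I,e)\frown(J,e'),y\rangle$ if $f(x)=\langle J,e',y\rangle$, $f^\star\langle I,e,x\rangle=(I,e)\frown(J,e')$ if $f(x)=\langle J,e'\rangle$, $f^\star\langle I,e\rangle=\langle I,e\rangle$. These define monads $\mathbb{H}'_S,\mathbb{H}_S$. Order $\sqsubseteq$ on $TY$: $a\sqsubseteq b$ iff $a=b$, or $a=\langle I,e\rangle$ and $b\in\{\langle I',e'\rangle,\langle I',e',y\rangle\}$ with $I\subseteq I'$ and $e=e'|_I$. An Elgot monad is a monad $\mathbb{T}$ with an operator sending $f\colon X\to T(Y\uplus X)$ to $f^\dagger\colon X\to TY$ satisfying the standard Elgot iteration axioms: fixpoint $[\eta,f^\dagger]^\star\cdot f=f^\dagger$; naturality $g^\star\cdot f^\dagger=([T\mathsf{inl}\cdot g,\eta\cdot\mathsf{inr}]^\star\cdot f)^\dagger$; codiagonal $(T[\mathsf{id},\mathsf{inr}]\cdot f)^\dagger=(f^\dagger)^\dagger$ for $f\colon X\to T((Y\uplus X)\uplus X)$; uniformity: $f\cdot h=T(\mathsf{id}\uplus h)\cdot g$ implies $f^\dagger\cdot h=g^\dagger$. *)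

theory Defs
  imports Complex_Main
begin

(* Trajectories over S: a trajectory <I,e> with e : I -> S is represented by a partial
   map e :: real => 's option with dom e = I (so I is determined by e) and ran e \<subseteq> S. *)

datatype ('s, 'x) trj = Ret "real \<Rightarrow> 's option" 'x | Div "real \<Rightarrow> 's option"

definition fin_open :: "real set \<Rightarrow> bool" where
  "fin_open I \<longleftrightarrow> (\<exists>d\<ge>0. I = {0..<d})"

definition half_open :: "real set \<Rightarrow> bool" where
  "half_open I \<longleftrightarrow> fin_open I \<or> I = {0..}"

definition interval :: "real set \<Rightarrow> bool" where
  "interval I \<longleftrightarrow> half_open I \<or> (\<exists>d\<ge>0. I = {0..d})"

(* which of the two monads: Prime = H'_S, Full = H_S *)
datatype variant = Prime | Full

definition Hc :: "variant \<Rightarrow> 's set \<Rightarrow> ('s, 'x) trj set" where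
  "Hc k S =
     {Ret e x | e x. fin_open (dom e) \<and> ran e \<subseteq> S} \<union>
     {Div e | e. (if k = Prime then half_open (dom e) else interval (dom e)) \<and> ran e \<subseteq> S}"

definition len :: "(real \<Rightarrow> 's option) \<Rightarrow> real" where
  "len e = (THE d. d \<ge> 0 \<and> dom e = {0..<d})"

definition cat :: "(real \<Rightarrow> 's option) \<Rightarrow> (real \<Rightarrow> 's option) \<Rightarrow> (real \<Rightarrow> 's option)" where
  "cat e1 e2 = (\<lambda>t. if t < len e1 then e1 t else e2 (t - len e1))"

definition eta :: "'x \<Rightarrow> ('s, 'x) trj" where
  "eta x = Ret Map.empty x"

fun kstar :: "('x \<Rightarrow> ('s, 'y) trj) \<Rightarrow> ('s, 'x) trj \<Rightarrow> ('s, 'y) trj" where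
  "kstar f (Ret e x) = (case f x of Ret e' y \<Rightarrow> Ret (cat e e') y | Div e' \<Rightarrow> Div (cat e e'))"
| "kstar f (Div e) = Div e"

definition Tmap :: "('x \<Rightarrow> 'y) \<Rightarrow> ('s, 'x) trj \<Rightarrow> ('s, 'y) trj" where
  "Tmap h = kstar (eta \<circ> h)"

definition le :: "('s, 'y) trj \<Rightarrow> ('s, 'y) trj \<Rightarrow> bool" where
  "le a b \<longleftrightarrow> a = b \<or>
     (\<exists>e. a = Div e \<and> (\<exists>e'. (b = Div e' \<or> (\<exists>y. b = Ret e' y)) \<and> e \<subseteq>\<^sub>m e'))"

definition fle :: "('x \<Rightarrow> ('s, 'y) trj) \<Rightarrow> ('x \<Rightarrow> ('s, 'y) trj) \<Rightarrow> bool" where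
  "fle g h \<longleftrightarrow> (\<forall>x. le (g x) (h x))"

definition Fun :: "variant \<Rightarrow> 's set \<Rightarrow> ('x \<Rightarrow> ('s, 'y) trj) set" where
  "Fun k S = {g. \<forall>x. g x \<in> Hc k S}"

definition is_lub :: "variant \<Rightarrow> 's set \<Rightarrow> ('x \<Rightarrow> ('s, 'y) trj) set \<Rightarrow> ('x \<Rightarrow> ('s, 'y) trj) \<Rightarrow> bool" where
  "is_lub k S C g \<longleftrightarrow> g \<in> Fun k S \<and> (\<forall>c\<in>C. fle c g) \<and>
     (\<forall>h\<in>Fun k S. (\<forall>c\<in>C. fle c h) \<longrightarrow> fle g h)"

definition Phi :: "('x \<Rightarrow> ('s, 'y + 'x) trj) \<Rightarrow> ('x \<Rightarrow> ('s, 'y) trj) \<Rightarrow> ('x \<Rightarrow> ('s, 'y) trj)" where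
  "Phi f g = (\<lambda>x. kstar (case_sum eta g) (f x))"

definition omega_continuous :: "variant \<Rightarrow> 's set \<Rightarrow> (('x \<Rightarrow> ('s, 'y) trj) \<Rightarrow> ('x \<Rightarrow> ('s, 'y) trj)) \<Rightarrow> bool" where
  "omega_continuous k S F \<longleftrightarrow>
     (\<forall>g\<in>Fun k S. F g \<in> Fun k S) \<and>
     (\<forall>g\<in>Fun k S. \<forall>h\<in>Fun k S. fle g h \<longrightarrow> fle (F g) (F h)) \<and>
     (\<forall>c :: nat \<Rightarrow> ('x \<Rightarrow> ('s, 'y) trj). \<forall>g.
        (\<forall>n. c n \<in> Fun k S) \<and> (\<forall>n. fle (c n) (c (Suc n))) \<and> is_lub k S (range c) g
        \<longrightarrow> is_lub k S (range (F \<circ> c)) (F g))"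

definition is_lfp :: "variant \<Rightarrow> 's set \<Rightarrow> ('x \<Rightarrow> ('s, 'y + 'x) trj) \<Rightarrow> ('x \<Rightarrow> ('s, 'y) trj) \<Rightarrow> bool" where
  "is_lfp k S f g \<longleftrightarrow> g \<in> Fun k S \<and> Phi f g = g \<and>
     (\<forall>h\<in>Fun k S. Phi f h = h \<longrightarrow> fle g h)"

definition dagger :: "variant \<Rightarrow> 's set \<Rightarrow> ('x \<Rightarrow> ('s, 'y + 'x) trj) \<Rightarrow> ('x \<Rightarrow> ('s, 'y) trj)" where
  "dagger k S f = (THE g. is_lfp k S f g)"

end

theory Submission
  imports Defs
begin

text \<open>
  Under \<open>\<sqsubseteq>\<close> only divergent trajectories lie strictly below anything. Hence an
  \<open>\<omega>\<close>-chain either becomes constant once it reaches a terminating trajectory, or consists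
  of divergent trajectories whose union is again a trajectory: an increasing union of initial
  segments \<open>[0,d)\<close>, \<open>[0,d]\<close> of the half-line is again such a segment, and of
  the form \<open>[0,d)\<close> or \<open>[0,\<infinity>)\<close> if all of them are. Kleisli extension is monotone and
  preserves these suprema, so \<open>\<Phi> g = [\<eta>, g]\<^sup>\<star> \<cdot> f\<close> is
  \<open>\<omega>\<close>-continuous and \<open>f\<^sup>\<dagger>\<close> is the supremum of the Kleene approximants
  \<open>\<Phi>\<^sup>n \<bottom>\<close>. The fixpoint law is then immediate; naturality and uniformity follow by
  transferring the approximants along a strict continuous map, and the codiagonal law from
  the least-fixpoint property together with naturality.
\<close>

fun trace :: "('s, 'x) trj \<Rightarrow> real \<Rightarrow> 's option" where
  "trace (Ret e x) = e"
| "trace (Div e) = e"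

fun is_Ret :: "('s, 'x) trj \<Rightarrow> bool" where
  "is_Ret (Ret e x) = True"
| "is_Ret (Div e) = False"

lemma Div_trace: "\<not> is_Ret a \<Longrightarrow> a = Div (trace a)"
  by (cases a) auto

lemma le_Ret_iff [simp]: "le (Ret e x) b \<longleftrightarrow> b = Ret e x"
  by (auto simp: le_def)

lemma le_Div_iff [simp]: "le (Div e) b \<longleftrightarrow> e \<subseteq>\<^sub>m trace b"
  by (cases b) (auto simp: le_def map_le_def)

lemma trj_le_refl [simp]: "le a a"
  by (simp add: le_def)

lemma trace_mono: "le a b \<Longrightarrow> trace a \<subseteq>\<^sub>m trace b"
  by (cases a) auto

lemma trj_le_trans: "le a b \<Longrightarrow> le b c \<Longrightarrow> le a c"
  by (cases a; cases b) (auto dest: trace_mono intro: map_le_trans)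

lemma trj_le_antisym: "le a b \<Longrightarrow> le b a \<Longrightarrow> a = b"
  by (cases a; cases b) (auto intro: map_le_antisym)

lemma len_eqI:
  assumes "0 \<le> d" "dom e = {0..<d}"
  shows "len e = d"
  unfolding len_def
proof (rule the_equality)
  fix d' assume "0 \<le> d' \<and> dom e = {0..<d'}"
  with assms have "{0..<d} = {0..<d'}" "0 \<le> d'" by auto
  then show "d' = d"
    by (metis assms(1) atLeastLessThan_empty_iff atLeastLessThan_eq_iff order.order_iff_strict)
qed (use assms in auto)

lemma fin_open_iff_len: "fin_open (dom e) \<longleftrightarrow> 0 \<le> len e \<and> dom e = {0..<len e}"
  unfolding fin_open_def by (metis len_eqI)

lemma ran_cat: "ran (cat e e') \<subseteq> ran e \<union> ran e'"
  unfolding cat_def ran_def by auto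

lemma len_empty [simp]: "len Map.empty = 0"
  by (rule len_eqI) auto

lemma cat_empty_left:
  assumes "dom e \<subseteq> {0..}"
  shows "cat Map.empty e = e"
proof
  fix t
  show "cat Map.empty e t = e t"
    using assms by (simp add: cat_def) (metis atLeast_iff domIff linorder_not_le subsetD)
qed

lemma cat_empty_right:
  assumes "fin_open (dom e)"
  shows "cat e Map.empty = e"
proof
  fix t
  show "cat e Map.empty t = e t"
    using assms by (simp add: cat_def fin_open_iff_len) (metis atLeastLessThan_iff domIff)
qed

lemma map_le_cat: "fin_open (dom e) \<Longrightarrow> e \<subseteq>\<^sub>m cat e e'"
  by (force simp: cat_def map_le_def fin_open_iff_len)

lemma cat_mono: "e1 \<subseteq>\<^sub>m e2 \<Longrightarrow> cat e e1 \<subseteq>\<^sub>m cat e e2"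
  unfolding cat_def map_le_def by (auto simp: dom_def)

lemma dom_cat:
  assumes "fin_open (dom e)"
  shows "dom (cat e e') = {0..<len e} \<union> {t. len e \<le> t \<and> t - len e \<in> dom e'}"
  using assms unfolding fin_open_iff_len cat_def by (auto simp: dom_def split: if_splits)

lemma dom_cat_cases:
  assumes "fin_open (dom e)" "0 \<le> d"
  shows "dom e' = {0..<d} \<Longrightarrow> dom (cat e e') = {0..<len e + d}"
    and "dom e' = {0..d} \<Longrightarrow> dom (cat e e') = {0..len e + d}"
    and "dom e' = {0..} \<Longrightarrow> dom (cat e e') = {0..}"
  using assms dom_cat[OF assms(1), of e'] by (auto simp: fin_open_iff_len)

lemma fin_open_cat: "fin_open (dom e) \<Longrightarrow> fin_open (dom e') \<Longrightarrow> fin_open (dom (cat e e'))"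
  by (metis add_nonneg_nonneg dom_cat_cases(1) fin_open_def fin_open_iff_len)

lemma len_cat: "fin_open (dom e) \<Longrightarrow> fin_open (dom e') \<Longrightarrow> len (cat e e') = len e + len e'"
  by (metis add_nonneg_nonneg dom_cat_cases(1) fin_open_iff_len len_eqI)

lemma half_open_cat: "fin_open (dom e) \<Longrightarrow> half_open (dom e') \<Longrightarrow> half_open (dom (cat e e'))"
  by (metis dom_cat_cases(3) fin_open_cat half_open_def order_refl)

lemma interval_cat: "fin_open (dom e) \<Longrightarrow> interval (dom e') \<Longrightarrow> interval (dom (cat e e'))"
  unfolding interval_def
  by (metis dom_cat_cases(2) fin_open_iff_len half_open_cat add_nonneg_nonneg)

lemma cat_assoc:
  assumes "fin_open (dom e1)" "fin_open (dom e2)"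
  shows "cat (cat e1 e2) e3 = cat e1 (cat e2 e3)"
  using assms len_cat[OF assms] by (auto simp: cat_def fun_eq_iff fin_open_iff_len algebra_simps)

section \<open>Initial segments of the half-line\<close>

definition initial_segment :: "real set \<Rightarrow> bool" where
  "initial_segment D \<longleftrightarrow> D \<subseteq> {0..} \<and> (\<forall>t\<in>D. {0..t} \<subseteq> D)"

lemma initial_segment_cases:
  assumes "initial_segment D"
  obtains (half_line) "D = {0..}"
  | (right_open) d where "0 \<le> d" "D = {0..<d}"
  | (closed) d where "0 \<le> d" "D = {0..d}"
proof -
  have nonneg: "D \<subseteq> {0..}" and down: "\<And>s t. t \<in> D \<Longrightarrow> 0 \<le> s \<Longrightarrow> s \<le> t \<Longrightarrow> s \<in> D"
    using assms unfolding initial_segment_def by (meson atLeastAtMost_iff subsetD)+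
  consider (empty) "D = {}" | (unbounded) "\<not> bdd_above D" | (bounded) "D \<noteq> {}" "bdd_above D"
    by argo
  then show thesis
  proof cases
    case empty
    then show thesis using right_open[of 0] by simp
  next
    case unbounded
    have "s \<in> D" if "0 \<le> s" for s
    proof -
      obtain t where "t \<in> D" "s < t"
        using unbounded unfolding bdd_above_def by (meson not_le)
      then show ?thesis using that by (meson down less_imp_le)
    qed
    with nonneg have "D = {0..}" by auto
    then show thesis by (rule half_line)
  next
    case bounded
    define d where "d = Sup D"
    have below: "{0..<d} \<subseteq> D"
    proof
      fix s assume "s \<in> {0..<d}"
      then obtain t where "t \<in> D" "s < t"
        using less_cSup_iff[OF bounded] unfolding d_def by auto
      with \<open>s \<in> {0..<d}\<close> show "s \<in> D" by (meson down atLeastLessThan_iff less_imp_le)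
    qed
    have above: "D \<subseteq> {0..d}"
      using nonneg cSup_upper[OF _ bounded(2)] unfolding d_def by auto
    have "0 \<le> d"
      using bounded(1) above by auto
    show thesis
    proof (cases "d \<in> D")
      case True
      with below above have "D = {0..d}" by (auto simp: less_le)
      with \<open>0 \<le> d\<close> show thesis by (rule closed)
    next
      case False
      with below above have "D = {0..<d}" by (auto simp: less_le)
      with \<open>0 \<le> d\<close> show thesis by (rule right_open)
    qed
  qed
qed

lemma interval_initial_segment: "initial_segment D \<Longrightarrow> interval D"
  unfolding interval_def half_open_def fin_open_def by (erule initial_segment_cases) blast+

lemma half_open_initial_segment:
  assumes "initial_segment D" and no_max: "\<forall>t\<in>D. \<exists>u\<in>D. t < u"
  shows "half_open D"
  using assms(1)
proof (cases rule: initial_segment_cases)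
  case (closed d)
  then show ?thesis using no_max by (meson atLeastAtMost_iff not_le order_refl)
qed (unfold half_open_def fin_open_def, blast+)

lemma initial_segment_interval: "interval D \<Longrightarrow> initial_segment D"
  by (auto simp: initial_segment_def interval_def half_open_def fin_open_def)

lemma half_open_no_max:
  assumes "half_open D" "t \<in> D"
  shows "\<exists>u\<in>D. t < u"
  using assms unfolding half_open_def fin_open_def
proof (elim disjE exE conjE)
  fix d assume "D = {0..<d}"
  with assms(2) show ?thesis by (intro bexI[of _ "(t + d) / 2"]) auto
qed (intro bexI[of _ "t + 1"], auto)

definition div_domain :: "variant \<Rightarrow> real set \<Rightarrow> bool" where
  "div_domain k I \<longleftrightarrow> (if k = Prime then half_open I else interval I)"

lemma div_domain_Union:
  assumes "\<And>D. D \<in> \<D> \<Longrightarrow> div_domain k D"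
  shows "div_domain k (\<Union>\<D>)"
proof -
  have "initial_segment D" if "D \<in> \<D>" for D
    using assms[OF that] unfolding div_domain_def
    by (metis initial_segment_interval interval_def)
  then have "initial_segment (\<Union>\<D>)"
    unfolding initial_segment_def by blast
  moreover have "\<forall>t\<in>\<Union>\<D>. \<exists>u\<in>\<Union>\<D>. t < u" if "k = Prime"
    using assms that half_open_no_max unfolding div_domain_def by (metis UnionE UnionI)
  ultimately show ?thesis
    unfolding div_domain_def by (simp add: interval_initial_segment half_open_initial_segment)
qed

lemma Ret_in_Hc [simp]: "Ret e x \<in> Hc k S \<longleftrightarrow> fin_open (dom e) \<and> ran e \<subseteq> S"
  by (auto simp: Hc_def)

lemma Div_in_Hc [simp]: "Div e \<in> Hc k S \<longleftrightarrow> div_domain k (dom e) \<and> ran e \<subseteq> S"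
  by (auto simp: Hc_def div_domain_def)

lemma dom_trace_nonneg: "a \<in> Hc k S \<Longrightarrow> dom (trace a) \<subseteq> {0..}"
  by (cases a) (auto simp: div_domain_def interval_def half_open_def fin_open_def split: if_splits)

lemma div_domain_cat: "fin_open (dom e) \<Longrightarrow> div_domain k (dom e') \<Longrightarrow> div_domain k (dom (cat e e'))"
  by (simp add: div_domain_def half_open_cat interval_cat)

lemma fin_open_empty [simp]: "fin_open {}"
  unfolding fin_open_def by (auto intro!: exI[of _ 0])

lemma eta_in_Hc [simp]: "eta x \<in> Hc k S"
  by (simp add: eta_def)

lemma in_FunD: "f \<in> Fun k S \<Longrightarrow> f x \<in> Hc k S"
  by (simp add: Fun_def)

definition prepend :: "(real \<Rightarrow> 's option) \<Rightarrow> ('s, 'y) trj \<Rightarrow> ('s, 'y) trj" where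
  "prepend e b = (case b of Ret e' y \<Rightarrow> Ret (cat e e') y | Div e' \<Rightarrow> Div (cat e e'))"

lemma prepend_simps [simp]:
  "prepend e (Ret e' y) = Ret (cat e e') y"
  "prepend e (Div e') = Div (cat e e')"
  by (simp_all add: prepend_def)

lemma kstar_Ret [simp]: "kstar f (Ret e x) = prepend e (f x)"
  by (simp add: prepend_def)

declare kstar.simps(1) [simp del]

lemma is_Ret_prepend [simp]: "is_Ret (prepend e b) = is_Ret b"
  by (cases b) simp_all

lemma trace_prepend [simp]: "trace (prepend e b) = cat e (trace b)"
  by (cases b) simp_all

lemma prepend_in_Hc:
  assumes "fin_open (dom e)" "ran e \<subseteq> S" "b \<in> Hc k S"
  shows "prepend e b \<in> Hc k S"
proof -
  have "ran (cat e e') \<subseteq> S" if "ran e' \<subseteq> S" for e'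
    using ran_cat[of e e'] assms(2) that by blast
  with assms show ?thesis
    by (cases b) (simp_all add: fin_open_cat div_domain_cat)
qed

lemma prepend_empty: "dom (trace b) \<subseteq> {0..} \<Longrightarrow> prepend Map.empty b = b"
  by (cases b) (simp_all add: cat_empty_left)

lemma prepend_prepend:
  "fin_open (dom e1) \<Longrightarrow> fin_open (dom e2) \<Longrightarrow> prepend e1 (prepend e2 b) = prepend (cat e1 e2) b"
  by (cases b) (simp_all add: cat_assoc)

lemma kstar_prepend:
  assumes "fin_open (dom e)" "b \<in> Hc k S"
  shows "kstar g (prepend e b) = prepend e (kstar g b)"
  using assms by (cases b) (simp_all add: prepend_prepend)

lemma prepend_mono: "le a b \<Longrightarrow> le (prepend e a) (prepend e b)"
  by (cases a) (auto simp: cat_mono)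

lemma kstar_in_Hc:
  assumes "f \<in> Fun k S" "a \<in> Hc k S"
  shows "kstar f a \<in> Hc k S"
  using assms(2) by (cases a) (simp_all add: prepend_in_Hc in_FunD[OF assms(1)])

lemma kstar_eta_left: "f x \<in> Hc k S \<Longrightarrow> kstar f (eta x) = f x"
  by (simp add: eta_def prepend_empty dom_trace_nonneg)

lemma kstar_eta_right: "a \<in> Hc k S \<Longrightarrow> kstar eta a = a"
  by (cases a) (simp_all add: eta_def cat_empty_right)

lemma kstar_assoc:
  assumes "f \<in> Fun k S" "a \<in> Hc k S"
  shows "kstar g (kstar f a) = kstar (kstar g \<circ> f) a"
  using assms(2) kstar_prepend[OF _ in_FunD[OF assms(1)]] by (cases a) auto

lemma Tmap_Ret: "fin_open (dom e) \<Longrightarrow> Tmap h (Ret e x) = Ret e (h x)"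
  by (simp add: Tmap_def eta_def cat_empty_right)

lemma Tmap_Div [simp]: "Tmap h (Div e) = Div e"
  by (simp add: Tmap_def)

lemma Tmap_in_Hc: "a \<in> Hc k S \<Longrightarrow> Tmap h a \<in> Hc k S"
  by (cases a) (simp_all add: Tmap_Ret)

lemma kstar_Tmap: "a \<in> Hc k S \<Longrightarrow> kstar f (Tmap h a) = kstar (f \<circ> h) a"
  by (cases a) (simp_all add: Tmap_Ret)

lemma kstar_mono_fun:
  assumes "\<And>y. le (f y) (g y)"
  shows "le (kstar f a) (kstar g a)"
  using assms by (cases a) (simp_all add: prepend_mono)

lemma kstar_mono:
  assumes "le a b" "b \<in> Hc k S"
  shows "le (kstar f a) (kstar f b)"
proof (cases "a = b")
  case False
  then obtain e where a: "a = Div e" "e \<subseteq>\<^sub>m trace b"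
    using assms(1) by (cases a) auto
  show ?thesis
  proof (cases b)
    case (Ret e' y)
    with assms(2) have "e' \<subseteq>\<^sub>m trace (kstar f b)"
      by (simp add: map_le_cat)
    with a Ret show ?thesis
      by (auto intro: map_le_trans)
  qed (use a in simp)
qed simp

lemma eta_in_Fun [simp]: "eta \<in> Fun k S"
  by (simp add: Fun_def)

lemma case_sum_in_Fun: "f \<in> Fun k S \<Longrightarrow> g \<in> Fun k S \<Longrightarrow> case_sum f g \<in> Fun k S"
  by (auto simp: Fun_def split: sum.splits)

lemma comp_in_Fun: "f \<in> Fun k S \<Longrightarrow> f \<circ> h \<in> Fun k S"
  by (simp add: Fun_def)

lemma kstar_comp_in_Fun: "g \<in> Fun k S \<Longrightarrow> f \<in> Fun k S \<Longrightarrow> kstar g \<circ> f \<in> Fun k S"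
  by (simp add: Fun_def kstar_in_Hc)

lemma Tmap_comp_in_Fun: "f \<in> Fun k S \<Longrightarrow> Tmap h \<circ> f \<in> Fun k S"
  by (simp add: Fun_def Tmap_in_Hc)

section \<open>Least upper bounds of chains\<close>

definition compatible_maps :: "('i \<Rightarrow> 'a \<Rightarrow> 'b option) \<Rightarrow> bool" where
  "compatible_maps m \<longleftrightarrow> (\<forall>i j t a b. m i t = Some a \<longrightarrow> m j t = Some b \<longrightarrow> a = b)"

text \<open>Where no \<open>m i\<close> is defined, the arbitrary choice of \<open>i\<close> still yields \<open>None\<close>.\<close>

definition map_Union :: "('i \<Rightarrow> 'a \<Rightarrow> 'b option) \<Rightarrow> 'a \<Rightarrow> 'b option" where
  "map_Union m t = m (SOME i. m i t \<noteq> None) t"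

lemma map_Union_eq_None: "map_Union m t = None \<longleftrightarrow> (\<forall>i. m i t = None)"
  unfolding map_Union_def by (metis (mono_tags, lifting) someI_ex)

lemma map_Union_eq_Some:
  assumes "compatible_maps m"
  shows "map_Union m t = Some a \<longleftrightarrow> (\<exists>i. m i t = Some a)"
proof
  assume "map_Union m t = Some a"
  then show "\<exists>i. m i t = Some a"
    unfolding map_Union_def by blast
next
  assume "\<exists>i. m i t = Some a"
  then obtain i where i: "m i t = Some a" by blast
  then obtain b where "map_Union m t = Some b"
    using map_Union_eq_None[of m t] by fastforce
  moreover from this obtain j where "m j t = Some b"
    unfolding map_Union_def by blast
  ultimately show "map_Union m t = Some a"
    using assms i unfolding compatible_maps_def by metis
qed

lemma dom_map_Union: "dom (map_Union m) = (\<Union>i. dom (m i))"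
  by (rule set_eqI) (simp add: domIff map_Union_eq_None)

lemma ran_map_Union:
  assumes "compatible_maps m"
  shows "ran (map_Union m) = (\<Union>i. ran (m i))"
  unfolding ran_def by (auto simp: map_Union_eq_Some[OF assms])

lemma map_le_map_Union:
  assumes "compatible_maps m"
  shows "m i \<subseteq>\<^sub>m map_Union m"
  unfolding map_le_def by (metis domD map_Union_eq_Some[OF assms])

lemma map_Union_least:
  assumes "compatible_maps m" "\<And>i. m i \<subseteq>\<^sub>m e"
  shows "map_Union m \<subseteq>\<^sub>m e"
  unfolding map_le_def
proof
  fix t
  assume "t \<in> dom (map_Union m)"
  then obtain a i where "map_Union m t = Some a" "m i t = Some a"
    using map_Union_eq_Some[OF assms(1)] by blast
  with assms(2)[of i] show "map_Union m t = e t"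
    unfolding map_le_def by (metis domI)
qed

lemma map_Union_const [simp]: "map_Union (\<lambda>i. e) = e"
  by (simp add: map_Union_def fun_eq_iff)

lemma map_Union_cat: "map_Union (\<lambda>i. cat e (m i)) = cat e (map_Union m)"
  by (simp add: map_Union_def cat_def fun_eq_iff)

definition trj_chain :: "(nat \<Rightarrow> ('s, 'y) trj) \<Rightarrow> bool" where
  "trj_chain c \<longleftrightarrow> (\<forall>n. le (c n) (c (Suc n)))"

lemma trj_chain_le:
  assumes "trj_chain c" "n \<le> m"
  shows "le (c n) (c m)"
  using assms(2)
proof (induction m rule: dec_induct)
  case (step m)
  then show ?case
    using assms(1) trj_le_trans unfolding trj_chain_def by blast
qed simp

lemma compatible_traces:
  assumes "trj_chain c"
  shows "compatible_maps (\<lambda>n. trace (c n))"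
  unfolding compatible_maps_def
proof (intro allI impI)
  fix i j t a b
  assume "trace (c i) t = Some a" "trace (c j) t = Some b"
  moreover have "trace (c i) \<subseteq>\<^sub>m trace (c j) \<or> trace (c j) \<subseteq>\<^sub>m trace (c i)"
    using trj_chain_le[OF assms] trace_mono nat_le_linear by blast
  ultimately show "a = b"
    unfolding map_le_def by (metis domI option.inject)
qed

lemma le_is_Ret: "is_Ret a \<Longrightarrow> le a b \<Longrightarrow> b = a"
  by (cases a) auto

lemma trj_chain_Ret_eq: "trj_chain c \<Longrightarrow> is_Ret (c i) \<Longrightarrow> is_Ret (c j) \<Longrightarrow> c i = c j"
  by (metis le_is_Ret nat_le_linear trj_chain_le)

text \<open>A chain that reaches a terminating trajectory is constant from there on.\<close>

definition trj_lub :: "(nat \<Rightarrow> ('s, 'y) trj) \<Rightarrow> ('s, 'y) trj" where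
  "trj_lub c =
     (if \<exists>n. is_Ret (c n) then c (SOME n. is_Ret (c n)) else Div (map_Union (\<lambda>n. trace (c n))))"

lemma trj_lub_Ret: "trj_chain c \<Longrightarrow> is_Ret (c n) \<Longrightarrow> trj_lub c = c n"
  unfolding trj_lub_def by (metis someI trj_chain_Ret_eq)

lemma trj_lub_Div: "(\<And>n. \<not> is_Ret (c n)) \<Longrightarrow> trj_lub c = Div (map_Union (\<lambda>n. trace (c n)))"
  unfolding trj_lub_def by simp

lemma trj_lub_upper:
  assumes "trj_chain c"
  shows "le (c n) (trj_lub c)"
proof (cases "\<exists>j. is_Ret (c j)")
  case True
  then obtain j where j: "is_Ret (c j)" by blast
  show ?thesis
  proof (cases "n \<le> j")
    case True
    then show ?thesis
      using trj_chain_le[OF assms] trj_lub_Ret[OF assms j] by simp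
  next
    case False
    then have "c n = c j"
      using trj_chain_le[OF assms] le_is_Ret[OF j] by simp
    then show ?thesis
      using trj_lub_Ret[OF assms j] by simp
  qed
next
  case False
  then have "le (Div (trace (c n))) (trj_lub c)"
    using map_le_map_Union[OF compatible_traces[OF assms]] by (simp add: trj_lub_Div)
  with False show ?thesis
    by (metis Div_trace)
qed

lemma trj_lub_least:
  assumes "trj_chain c" "\<And>n. le (c n) b"
  shows "le (trj_lub c) b"
proof (cases "\<exists>j. is_Ret (c j)")
  case True
  then obtain j where "is_Ret (c j)" by blast
  with assms show ?thesis
    by (simp add: trj_lub_Ret)
next
  case False
  have "map_Union (\<lambda>n. trace (c n)) \<subseteq>\<^sub>m trace b"
    by (rule map_Union_least[OF compatible_traces[OF assms(1)] trace_mono[OF assms(2)]])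
  with False show ?thesis
    by (simp add: trj_lub_Div)
qed

lemma trj_lub_in_Hc:
  assumes "trj_chain c" "\<And>n. c n \<in> Hc k S"
  shows "trj_lub c \<in> Hc k S"
proof (cases "\<exists>j. is_Ret (c j)")
  case True
  then show ?thesis
    using trj_lub_Ret[OF assms(1)] assms(2) by metis
next
  case False
  then have "c n = Div (trace (c n))" for n
    by (simp add: Div_trace)
  then have "div_domain k (dom (trace (c n)))" "ran (trace (c n)) \<subseteq> S" for n
    using assms(2)[of n] by (metis Div_in_Hc)+
  then show ?thesis
    using False compatible_traces[OF assms(1)]
    by (auto simp: trj_lub_Div dom_map_Union ran_map_Union intro!: div_domain_Union)
qed

lemma trj_lub_const [simp]: "trj_lub (\<lambda>n. a) = a"
  by (cases a) (simp_all add: trj_lub_def)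

lemma trj_lub_prepend: "trj_lub (\<lambda>n. prepend e (c n)) = prepend e (trj_lub c)"
  by (simp add: trj_lub_def map_Union_cat)

lemma kstar_trj_lub:
  assumes "trj_chain c" "\<And>n. c n \<in> Hc k S"
  shows "kstar f (trj_lub c) = trj_lub (\<lambda>n. kstar f (c n))"
proof (cases "\<exists>j. is_Ret (c j)")
  case True
  then obtain j where j: "is_Ret (c j)" by blast
  have chain: "trj_chain (\<lambda>n. kstar f (c n))"
    using assms kstar_mono unfolding trj_chain_def by blast
  show ?thesis
  proof (rule trj_le_antisym)
    show "le (kstar f (trj_lub c)) (trj_lub (\<lambda>n. kstar f (c n)))"
      using trj_lub_upper[OF chain, of j] trj_lub_Ret[OF assms(1) j] by simp
    show "le (trj_lub (\<lambda>n. kstar f (c n))) (kstar f (trj_lub c))"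
      using assms by (intro trj_lub_least chain kstar_mono trj_lub_upper trj_lub_in_Hc)
  qed
next
  case False
  then have "kstar f (c n) = Div (trace (c n))" for n
    by (metis Div_trace kstar.simps(2))
  with False show ?thesis
    by (simp add: trj_lub_Div)
qed

section \<open>Kleene iteration\<close>

lemma fle_refl [simp]: "fle g g"
  by (simp add: fle_def)

lemma fle_trans: "fle f g \<Longrightarrow> fle g h \<Longrightarrow> fle f h"
  unfolding fle_def by (metis trj_le_trans)

lemma fle_antisym: "fle f g \<Longrightarrow> fle g f \<Longrightarrow> f = g"
  unfolding fle_def by (metis ext trj_le_antisym)

definition fun_chain :: "(nat \<Rightarrow> 'x \<Rightarrow> ('s, 'y) trj) \<Rightarrow> bool" where
  "fun_chain c \<longleftrightarrow> (\<forall>n. fle (c n) (c (Suc n)))"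

definition pointwise_lub :: "(nat \<Rightarrow> 'x \<Rightarrow> ('s, 'y) trj) \<Rightarrow> 'x \<Rightarrow> ('s, 'y) trj" where
  "pointwise_lub c x = trj_lub (\<lambda>n. c n x)"

lemma fun_chain_trj_chain: "fun_chain c \<Longrightarrow> trj_chain (\<lambda>n. c n x)"
  by (simp add: fun_chain_def trj_chain_def fle_def)

lemma pointwise_lub_upper:
  assumes "fun_chain c"
  shows "fle (c n) (pointwise_lub c)"
  unfolding fle_def pointwise_lub_def using trj_lub_upper[OF fun_chain_trj_chain[OF assms]] by blast

lemma pointwise_lub_least: "fun_chain c \<Longrightarrow> (\<And>n. fle (c n) h) \<Longrightarrow> fle (pointwise_lub c) h"
  by (simp add: fle_def pointwise_lub_def trj_lub_least fun_chain_trj_chain)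

lemma pointwise_lub_in_Fun: "fun_chain c \<Longrightarrow> (\<And>n. c n \<in> Fun k S) \<Longrightarrow> pointwise_lub c \<in> Fun k S"
  by (simp add: Fun_def pointwise_lub_def trj_lub_in_Hc fun_chain_trj_chain)

lemma is_lub_pointwise_lub:
  "fun_chain c \<Longrightarrow> (\<And>n. c n \<in> Fun k S) \<Longrightarrow> is_lub k S (range c) (pointwise_lub c)"
  by (auto simp: is_lub_def pointwise_lub_in_Fun pointwise_lub_upper intro: pointwise_lub_least)

lemma is_lub_unique: "is_lub k S C g \<Longrightarrow> is_lub k S C h \<Longrightarrow> g = h"
  unfolding is_lub_def by (blast intro: fle_antisym)

lemma pointwise_lub_Suc:
  assumes "fun_chain c"
  shows "pointwise_lub (\<lambda>n. c (Suc n)) = pointwise_lub c"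
proof (rule fle_antisym)
  have chain: "fun_chain (\<lambda>n. c (Suc n))"
    using assms by (simp add: fun_chain_def)
  show "fle (pointwise_lub (\<lambda>n. c (Suc n))) (pointwise_lub c)"
    by (rule pointwise_lub_least[OF chain pointwise_lub_upper[OF assms]])
  show "fle (pointwise_lub c) (pointwise_lub (\<lambda>n. c (Suc n)))"
  proof (rule pointwise_lub_least[OF assms])
    fix n
    have "fle (c n) (c (Suc n))"
      using assms by (simp add: fun_chain_def)
    then show "fle (c n) (pointwise_lub (\<lambda>n. c (Suc n)))"
      using pointwise_lub_upper[OF chain, of n] by (rule fle_trans)
  qed
qed

lemma Phi_eq_comp: "Phi f g = kstar (case_sum eta g) \<circ> f"
  by (simp add: Phi_def comp_def)

lemma Phi_mono: "fle g h \<Longrightarrow> fle (Phi f g) (Phi f h)"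
  unfolding fle_def Phi_def by (auto intro: kstar_mono_fun split: sum.split)

lemma Phi_in_Fun: "f \<in> Fun k S \<Longrightarrow> g \<in> Fun k S \<Longrightarrow> Phi f g \<in> Fun k S"
  by (simp add: Phi_eq_comp kstar_comp_in_Fun case_sum_in_Fun)

lemma Phi_pointwise_lub: "Phi f (pointwise_lub c) = pointwise_lub (\<lambda>n. Phi f (c n))"
proof
  fix x
  show "Phi f (pointwise_lub c) x = pointwise_lub (\<lambda>n. Phi f (c n)) x"
  proof (cases "f x")
    case (Ret e s)
    then show ?thesis
      by (cases s) (simp_all add: Phi_def pointwise_lub_def trj_lub_prepend)
  qed (simp add: Phi_def pointwise_lub_def)
qed

lemma omega_continuous_Phi:
  fixes f :: "'x \<Rightarrow> ('s, 'y + 'x) trj"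
  assumes "f \<in> Fun k S"
  shows "omega_continuous k S (Phi f)"
  unfolding omega_continuous_def
proof (intro conjI ballI allI impI)
  fix c :: "nat \<Rightarrow> 'x \<Rightarrow> ('s, 'y) trj" and g
  assume "(\<forall>n. c n \<in> Fun k S) \<and> (\<forall>n. fle (c n) (c (Suc n))) \<and> is_lub k S (range c) g"
  then have c: "\<And>n. c n \<in> Fun k S" "fun_chain c" and g: "is_lub k S (range c) g"
    by (auto simp: fun_chain_def)
  have "g = pointwise_lub c"
    using is_lub_unique[OF g is_lub_pointwise_lub[OF c(2,1)]] .
  moreover have "fun_chain (\<lambda>n. Phi f (c n))"
    using c(2) Phi_mono unfolding fun_chain_def by blast
  ultimately show "is_lub k S (range (Phi f \<circ> c)) (Phi f g)"
    using is_lub_pointwise_lub[of "\<lambda>n. Phi f (c n)"] Phi_in_Fun[OF assms c(1)]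
    by (simp add: Phi_pointwise_lub comp_def)
qed (simp_all add: Phi_in_Fun[OF assms] Phi_mono)

definition bot_fun :: "'x \<Rightarrow> ('s, 'y) trj" where
  "bot_fun x = Div Map.empty"

lemma bot_fun_in_Fun [simp]: "bot_fun \<in> Fun k S"
  by (simp add: Fun_def bot_fun_def div_domain_def half_open_def interval_def)

lemma bot_fun_fle [simp]: "fle bot_fun g"
  by (simp add: bot_fun_def fle_def)

definition approx :: "('x \<Rightarrow> ('s, 'y + 'x) trj) \<Rightarrow> nat \<Rightarrow> 'x \<Rightarrow> ('s, 'y) trj" where
  "approx f n = (Phi f ^^ n) bot_fun"

lemma approx_0 [simp]: "approx f 0 = bot_fun"
  by (simp add: approx_def)

lemma approx_Suc [simp]: "approx f (Suc n) = Phi f (approx f n)"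
  by (simp add: approx_def)

lemma approx_in_Fun: "f \<in> Fun k S \<Longrightarrow> approx f n \<in> Fun k S"
  by (induction n) (simp_all add: Phi_in_Fun)

lemma fun_chain_approx: "fun_chain (approx f)"
proof -
  have "fle (approx f n) (approx f (Suc n))" for n
    by (induction n) (simp_all add: Phi_mono)
  then show ?thesis
    by (simp add: fun_chain_def)
qed

lemma pointwise_lub_approx_least:
  assumes "fle (Phi f h) h"
  shows "fle (pointwise_lub (approx f)) h"
proof (rule pointwise_lub_least[OF fun_chain_approx])
  fix n
  show "fle (approx f n) h"
    by (induction n) (auto intro: Phi_mono fle_trans assms)
qed

lemma pointwise_lub_approx_fixpoint: "Phi f (pointwise_lub (approx f)) = pointwise_lub (approx f)"
  using pointwise_lub_Suc[OF fun_chain_approx] by (simp add: Phi_pointwise_lub)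

lemma is_lfp_pointwise_lub_approx: "f \<in> Fun k S \<Longrightarrow> is_lfp k S f (pointwise_lub (approx f))"
  unfolding is_lfp_def
  by (simp add: pointwise_lub_in_Fun fun_chain_approx approx_in_Fun pointwise_lub_approx_fixpoint
      pointwise_lub_approx_least)

lemma dagger_eq_pointwise_lub_approx:
  assumes "f \<in> Fun k S"
  shows "dagger k S f = pointwise_lub (approx f)"
  unfolding dagger_def
proof (rule the_equality)
  show "is_lfp k S f (pointwise_lub (approx f))"
    using assms by (rule is_lfp_pointwise_lub_approx)
  fix g
  assume "is_lfp k S f g"
  then show "g = pointwise_lub (approx f)"
    using is_lfp_pointwise_lub_approx[OF assms] unfolding is_lfp_def
    by (metis fle_antisym fle_refl pointwise_lub_approx_least)
qed

lemma dagger_in_Fun: "f \<in> Fun k S \<Longrightarrow> dagger k S f \<in> Fun k S"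
  by (simp add: dagger_eq_pointwise_lub_approx pointwise_lub_in_Fun fun_chain_approx approx_in_Fun)

lemma dagger_fixpoint: "f \<in> Fun k S \<Longrightarrow> Phi f (dagger k S f) = dagger k S f"
  by (simp add: dagger_eq_pointwise_lub_approx pointwise_lub_approx_fixpoint)

lemma dagger_least: "f \<in> Fun k S \<Longrightarrow> fle (Phi f h) h \<Longrightarrow> fle (dagger k S f) h"
  by (simp add: dagger_eq_pointwise_lub_approx pointwise_lub_approx_least)

section \<open>The Elgot laws\<close>

lemma dagger_transfer:
  assumes f: "f \<in> Fun k S" and g: "g \<in> Fun k S"
    and strict: "H bot_fun = bot_fun"
    and commute: "\<And>G. G \<in> Fun k S \<Longrightarrow> H (Phi f G) = Phi g (H G)"
    and continuous: "\<And>c. fun_chain c \<Longrightarrow> (\<And>n. c n \<in> Fun k S) \<Longrightarrow>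
                       H (pointwise_lub c) = pointwise_lub (\<lambda>n. H (c n))"
  shows "H (dagger k S f) = dagger k S g"
proof -
  have "H (approx f n) = approx g n" for n
    by (induction n) (simp_all add: strict commute approx_in_Fun[OF f])
  then show ?thesis
    using continuous[OF fun_chain_approx approx_in_Fun[OF f]]
    by (simp add: dagger_eq_pointwise_lub_approx f g)
qed

lemma dagger_uniform:
  fixes f :: "'x \<Rightarrow> ('s, 'y + 'x) trj" and g :: "'z \<Rightarrow> ('s, 'y + 'z) trj"
  assumes f: "f \<in> Fun k S" and g: "g \<in> Fun k S" and eq: "f \<circ> h = Tmap (map_sum id h) \<circ> g"
  shows "dagger k S f \<circ> h = dagger k S g"
proof (rule dagger_transfer[where H = "\<lambda>G. G \<circ> h", OF f g])
  fix G :: "'x \<Rightarrow> ('s, 'y) trj"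
  have "Phi f G (h z) = Phi g (G \<circ> h) z" for z
  proof -
    have "Phi f G (h z) = kstar (case_sum eta G) (Tmap (map_sum id h) (g z))"
      using fun_cong[OF eq, of z] by (simp add: Phi_def)
    also have "\<dots> = kstar (case_sum eta G \<circ> map_sum id h) (g z)"
      by (rule kstar_Tmap[OF in_FunD[OF g]])
    finally show ?thesis
      by (simp add: Phi_def case_sum_o_map_sum)
  qed
  then show "Phi f G \<circ> h = Phi g (G \<circ> h)"
    by (simp add: fun_eq_iff)
qed (simp_all add: bot_fun_def pointwise_lub_def fun_eq_iff)

lemma kstar_case_sum_Tmap_Inl:
  assumes "g \<in> Fun k S" "G \<in> Fun k S"
  shows "kstar (case_sum eta G) \<circ> case_sum (Tmap Inl \<circ> g) (eta \<circ> Inr) = case_sum g G"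
proof
  fix s
  show "(kstar (case_sum eta G) \<circ> case_sum (Tmap Inl \<circ> g) (eta \<circ> Inr)) s = case_sum g G s"
    by (cases s)
      (simp_all add: case_sum_o_inj kstar_Tmap[OF in_FunD[OF assms(1)]]
        kstar_eta_right[OF in_FunD[OF assms(1)]] kstar_eta_left[where k = k and S = S]
        in_FunD[OF assms(2)])
qed

lemma Phi_kstar_comp:
  assumes "f \<in> Fun k S" "u \<in> Fun k S"
  shows "Phi (kstar u \<circ> f) G = kstar (kstar (case_sum eta G) \<circ> u) \<circ> f"
  by (simp add: Phi_def fun_eq_iff kstar_assoc[OF assms(2) in_FunD[OF assms(1)]])

lemma Phi_Tmap_comp:
  assumes "f \<in> Fun k S"
  shows "Phi (Tmap h \<circ> f) G = kstar (case_sum eta G \<circ> h) \<circ> f"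
  by (simp add: Phi_def fun_eq_iff kstar_Tmap[OF in_FunD[OF assms]])

lemma kstar_comp_Phi:
  assumes "f \<in> Fun k S" "g \<in> Fun k S" "G \<in> Fun k S"
  shows "kstar g \<circ> Phi f G = kstar (case_sum g (kstar g \<circ> G)) \<circ> f"
proof -
  have "kstar g \<circ> Phi f G = kstar (kstar g \<circ> case_sum eta G) \<circ> f"
    by (simp add: Phi_def fun_eq_iff
        kstar_assoc[OF case_sum_in_Fun[OF eta_in_Fun assms(3)] in_FunD[OF assms(1)]])
  also have "kstar g \<circ> case_sum eta G = case_sum g (kstar g \<circ> G)"
    by (simp add: fun_eq_iff kstar_eta_left[where f = g, OF in_FunD[OF assms(2)]] split: sum.split)
  finally show ?thesis .
qed

lemma kstar_comp_pointwise_lub: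
  assumes "fun_chain c" "\<And>n. c n \<in> Fun k S"
  shows "kstar g \<circ> pointwise_lub c = pointwise_lub (\<lambda>n. kstar g \<circ> c n)"
proof
  fix x
  show "(kstar g \<circ> pointwise_lub c) x = pointwise_lub (\<lambda>n. kstar g \<circ> c n) x"
    using kstar_trj_lub[OF fun_chain_trj_chain[OF assms(1)] in_FunD[OF assms(2)]]
    by (simp add: pointwise_lub_def)
qed

lemma dagger_naturality:
  fixes f :: "'x \<Rightarrow> ('s, 'y + 'x) trj" and g :: "'y \<Rightarrow> ('s, 'z) trj"
  assumes f: "f \<in> Fun k S" and g: "g \<in> Fun k S"
  shows "kstar g \<circ> dagger k S f
    = dagger k S (kstar (case_sum (Tmap Inl \<circ> g) (eta \<circ> Inr)) \<circ> f)"
proof (rule dagger_transfer[where H = "\<lambda>G. kstar g \<circ> G", OF f])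
  have inl: "case_sum (Tmap Inl \<circ> g) (eta \<circ> Inr) \<in> Fun k S"
    by (intro case_sum_in_Fun Tmap_comp_in_Fun comp_in_Fun eta_in_Fun g)
  then show "kstar (case_sum (Tmap Inl \<circ> g) (eta \<circ> Inr)) \<circ> f \<in> Fun k S"
    by (intro kstar_comp_in_Fun f)
  fix G :: "'x \<Rightarrow> ('s, 'y) trj"
  assume G: "G \<in> Fun k S"
  show "kstar g \<circ> Phi f G = Phi (kstar (case_sum (Tmap Inl \<circ> g) (eta \<circ> Inr)) \<circ> f) (kstar g \<circ> G)"
    by (simp add: kstar_comp_Phi[OF f g G] Phi_kstar_comp[OF f inl]
        kstar_case_sum_Tmap_Inl[OF g kstar_comp_in_Fun[OF g G]])
next
  fix c :: "nat \<Rightarrow> 'x \<Rightarrow> ('s, 'y) trj"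
  assume "fun_chain c" "\<And>n. c n \<in> Fun k S"
  then show "kstar g \<circ> pointwise_lub c = pointwise_lub (\<lambda>n. kstar g \<circ> c n)"
    by (rule kstar_comp_pointwise_lub)
qed (simp add: bot_fun_def fun_eq_iff)

lemma Phi_codiagonal:
  assumes "f \<in> Fun k S"
  shows "Phi (Tmap (case_sum id Inr) \<circ> f) G = kstar (case_sum (case_sum eta G) G) \<circ> f"
proof -
  have "case_sum eta G \<circ> case_sum id Inr = case_sum (case_sum eta G) G"
    by (simp add: fun_eq_iff split: sum.split)
  then show ?thesis
    by (simp add: Phi_Tmap_comp[OF assms])
qed

lemma dagger_codiagonal:
  fixes f :: "'x \<Rightarrow> ('s, ('y + 'x) + 'x) trj"
  assumes f: "f \<in> Fun k S"
  shows "dagger k S (Tmap (case_sum id Inr) \<circ> f) = dagger k S (dagger k S f)"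
    (is "dagger k S ?h = dagger k S ?F")
proof -
  \<comment> \<open>By naturality \<open>Phi ?F G\<close> is the iteration of \<open>f' G\<close>, and \<open>f' G\<close> shares its
      \<open>Phi\<close>-step at \<open>G\<close> with \<open>?h\<close>.\<close>
  define f' where "f' G = kstar (case_sum (Tmap Inl \<circ> case_sum eta G) (eta \<circ> Inr)) \<circ> f" for G
  have h: "?h \<in> Fun k S" and F: "?F \<in> Fun k S"
    using f by (simp_all add: Tmap_comp_in_Fun dagger_in_Fun)
  have f': "f' G \<in> Fun k S"
    and Phi_F: "Phi ?F G = dagger k S (f' G)"
    and Phi_f': "Phi (f' G) G = Phi ?h G"
    if G: "G \<in> Fun k S" for G
  proof -
    have eta_G: "case_sum eta G \<in> Fun k S"
      by (rule case_sum_in_Fun[OF eta_in_Fun G])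
    have inl: "case_sum (Tmap Inl \<circ> case_sum eta G) (eta \<circ> Inr) \<in> Fun k S"
      by (intro case_sum_in_Fun Tmap_comp_in_Fun comp_in_Fun eta_in_Fun eta_G)
    then show "f' G \<in> Fun k S"
      unfolding f'_def by (rule kstar_comp_in_Fun[OF _ f])
    show "Phi ?F G = dagger k S (f' G)"
      unfolding f'_def Phi_eq_comp by (rule dagger_naturality[OF f eta_G])
    show "Phi (f' G) G = Phi ?h G"
      unfolding f'_def Phi_kstar_comp[OF f inl] kstar_case_sum_Tmap_Inl[OF eta_G G]
      by (simp add: Phi_codiagonal[OF f])
  qed
  show ?thesis
  proof (rule fle_antisym)
    let ?D = "dagger k S ?h"
    have D: "?D \<in> Fun k S"
      by (rule dagger_in_Fun[OF h])
    have "fle (dagger k S (f' ?D)) ?D"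
      using Phi_f'[OF D] dagger_fixpoint[OF h] by (intro dagger_least[OF f'[OF D]]) simp
    then show "fle (dagger k S ?F) ?D"
      using Phi_F[OF D] by (intro dagger_least[OF F]) simp
  next
    let ?E = "dagger k S ?F"
    have E: "?E \<in> Fun k S"
      by (rule dagger_in_Fun[OF F])
    have "?E = dagger k S (f' ?E)"
      using Phi_F[OF E] dagger_fixpoint[OF F] by simp
    then have "Phi ?h ?E = ?E"
      using Phi_f'[OF E] dagger_fixpoint[OF f'[OF E]] by simp
    then show "fle (dagger k S ?h) ?E"
      using dagger_least[OF h] by simp
  qed
qed

theorem theorem2:
  fixes k :: variant and S :: "'s set"
  shows
   \<comment> \<open>monad laws\<close>
   "(\<forall>x::'x. (eta x :: ('s,'x) trj) \<in> Hc k S)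
  \<and> (\<forall>(f :: 'x \<Rightarrow> ('s,'y) trj) a. f \<in> Fun k S \<and> a \<in> Hc k S \<longrightarrow> kstar f a \<in> Hc k S)
  \<and> (\<forall>(f :: 'x \<Rightarrow> ('s,'y) trj) x. f \<in> Fun k S \<longrightarrow> kstar f (eta x) = f x)
  \<and> (\<forall>a :: ('s,'x) trj. a \<in> Hc k S \<longrightarrow> kstar eta a = a)
  \<and> (\<forall>(f :: 'x \<Rightarrow> ('s,'y) trj) (g :: 'y \<Rightarrow> ('s,'z) trj) a.
        f \<in> Fun k S \<and> g \<in> Fun k S \<and> a \<in> Hc k S \<longrightarrow>
        kstar g (kstar f a) = kstar (kstar g \<circ> f) a)
   \<comment> \<open>iteration: Phi f is omega-continuous and has a least fixpoint\<close>
  \<and> (\<forall>f :: 'x \<Rightarrow> ('s,'y + 'x) trj. f \<in> Fun k S \<longrightarrow>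
        omega_continuous k S (Phi f) \<and> (\<exists>g. is_lfp k S f g))
   \<comment> \<open>fixpoint\<close>
  \<and> (\<forall>f :: 'x \<Rightarrow> ('s,'y + 'x) trj. f \<in> Fun k S \<longrightarrow>
        kstar (case_sum eta (dagger k S f)) \<circ> f = dagger k S f)
   \<comment> \<open>naturality\<close>
  \<and> (\<forall>(f :: 'x \<Rightarrow> ('s,'y + 'x) trj) (g :: 'y \<Rightarrow> ('s,'z) trj). f \<in> Fun k S \<and> g \<in> Fun k S \<longrightarrow>
        kstar g \<circ> dagger k S f
        = dagger k S (kstar (case_sum (Tmap Inl \<circ> g) (eta \<circ> Inr)) \<circ> f))
   \<comment> \<open>codiagonal\<close>
  \<and> (\<forall>f :: 'x \<Rightarrow> ('s,('y + 'x) + 'x) trj. f \<in> Fun k S \<longrightarrow>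
        dagger k S (Tmap (case_sum id Inr) \<circ> f) = dagger k S (dagger k S f))
   \<comment> \<open>uniformity\<close>
  \<and> (\<forall>(f :: 'x \<Rightarrow> ('s,'y + 'x) trj) (g :: 'z \<Rightarrow> ('s,'y + 'z) trj) (h :: 'z \<Rightarrow> 'x).
        f \<in> Fun k S \<and> g \<in> Fun k S \<and> f \<circ> h = Tmap (map_sum id h) \<circ> g \<longrightarrow>
        dagger k S f \<circ> h = dagger k S g)"
proof (intro conjI allI impI; (elim conjE)?)
  fix f :: "'x \<Rightarrow> ('s, 'y + 'x) trj"
  assume f: "f \<in> Fun k S"
  show "omega_continuous k S (Phi f)"
    using f by (rule omega_continuous_Phi)
  show "\<exists>g. is_lfp k S f g"
    using is_lfp_pointwise_lub_approx[OF f] by blast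
  show "kstar (case_sum eta (dagger k S f)) \<circ> f = dagger k S f"
    using dagger_fixpoint[OF f] by (simp only: Phi_eq_comp)
qed (simp_all add: kstar_in_Hc kstar_eta_left[OF in_FunD] kstar_eta_right kstar_assoc
       dagger_naturality dagger_codiagonal dagger_uniform)

end
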